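(* Let $n$ be a power of two. An element $\sum_{0\le i\le n/2-1}a_i\mathfrak{r}^i+\sum_{0\le i\le n/2-1}b_i\mathfrak{s}\mathfrak{r}^i\in\mathbf{R}$ is invertible in $\mathbf{R}\otimes\mathbb{Q}$ if and only if for every odd $k$ with $1\le k\le n/2$, \[\Big|\sum_{0\le i\le n/2-1}a_ie^{2\pi\sqrt{-1}ki/n}\Big|-\Big|\sum_{0\le i\le n/2-1}b_ie^{2\pi\sqrt{-1}ki/n}\Big|\neq0,\] where $|\cdot|$ is the complex absolute value.
   Context: $D_{2n}$ is the dihedral group of order $2n$ generated by $\mathfrak{r},\mathfrak{s}$ with $\mathfrak{r}^n=\mathfrak{s}^2=1$, $\mathfrak{s}\mathfrak{r}\mathfrak{s}=\mathfrak{r}^{-1}$, and $\mathbf{R}=\mathbb{Z}[D_{2n}]/((\mathfrak{r}^{n/2}+1)\mathbb{Z}[D_{2n}])$ (quotient by a two-sided ideal), a free $\mathbb{Z}$-module with basis $\mathfrak{r}^i,\mathfrak{s}\mathfrak{r}^i$, $0\le i\le n/2-1$; the coefficients $a_i,b_i$ are integers. *)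

theory Defs
  imports Complex_Main
begin

text \<open>Model of R (x) Q = Q[D_2n]/(r^(n/2)+1) in the basis r^i, s r^i (0 <= i < m, m = n/2).
An element is a pair (a,b) of coefficient functions (only indices < m matter).
In R, r^m = -1, so r^e = sgn * r^idx with idx = e mod m and sign (-1)^(e div m).\<close>

definition rsgn :: "nat \<Rightarrow> int \<Rightarrow> rat" where
  "rsgn m e = (if even (e div int m) then 1 else -1)"

definition ridx :: "nat \<Rightarrow> int \<Rightarrow> nat" where
  "ridx m e = nat (e mod int m)"

definition rcontr :: "nat \<Rightarrow> int \<Rightarrow> nat \<Rightarrow> rat" where
  "rcontr m e k = (if ridx m e = k then rsgn m e else 0)"

text \<open>Multiplication rules: r^i r^j = r^(i+j), r^i (s r^j) = s r^(j-i),
  (s r^i) r^j = s r^(i+j), (s r^i)(s r^j) = r^(j-i).\<close>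
definition dmult :: "nat \<Rightarrow> (nat \<Rightarrow> rat) \<times> (nat \<Rightarrow> rat) \<Rightarrow> (nat \<Rightarrow> rat) \<times> (nat \<Rightarrow> rat)
    \<Rightarrow> (nat \<Rightarrow> rat) \<times> (nat \<Rightarrow> rat)" where
  "dmult m x y = (case x of (a, b) \<Rightarrow> case y of (c, d) \<Rightarrow>
     ((\<lambda>k. \<Sum>i<m. \<Sum>j<m. a i * c j * rcontr m (int i + int j) k
                          + b i * d j * rcontr m (int j - int i) k),
      (\<lambda>k. \<Sum>i<m. \<Sum>j<m. a i * d j * rcontr m (int j - int i) k
                          + b i * c j * rcontr m (int i + int j) k)))"

definition d_one :: "(nat \<Rightarrow> rat) \<times> (nat \<Rightarrow> rat)" where
  "d_one = ((\<lambda>k. if k = 0 then 1 else 0), (\<lambda>k. 0))"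

definition dinvertible :: "nat \<Rightarrow> (nat \<Rightarrow> rat) \<times> (nat \<Rightarrow> rat) \<Rightarrow> bool" where
  "dinvertible m x = (\<exists>y. dmult m x y = d_one \<and> dmult m y x = d_one)"

end

(*
  For a root w of w^m = -1, where m = n/2, sending r to diag(w, 1/w) and s to the coordinate swap
  represents x = a(r) + s b(r) by the matrix [[a(w), b(1/w)], [b(w), a(1/w)]]. Together the m
  roots separate the elements of R (x) Q, as a polynomial in r of degree below m vanishing at
  all of them is zero. The determinant a(w) a(1/w) - b(w) b(1/w) is
  multiplicative, so it cannot vanish when x is invertible. Conversely, if it vanishes nowhere,
  left multiplication by x is injective on the 2m-dimensional space R (x) Q, hence onto, which
  yields a right inverse; it is two-sided because it is so in every representation. The roots
  are e^(pi i k/m) for odd 1 <= k <= m and their inverses, and on the unit circle 1/w is the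
  conjugate of w, so the determinant is |a(w)|^2 - |b(w)|^2.
*)

theory Submission
  imports Defs "Jordan_Normal_Form.Determinant"
begin

section \<open>Evaluation at the roots of w^m = -1\<close>

definition rpoly :: "nat \<Rightarrow> (nat \<Rightarrow> rat) \<Rightarrow> complex \<Rightarrow> complex" where
  "rpoly m f w = (\<Sum>i<m. of_rat (f i) * w ^ i)"

lemma sum_rcontr_mult_power:
  assumes m: "m > 0" and w: "w ^ m = -1"
  shows "(\<Sum>k<m. of_rat (rcontr m e k) * w ^ k) = w powi e"
proof -
  have w0: "w \<noteq> 0" using w m by (metis zero_neq_neg_one zero_power)
  have idx: "ridx m e < m" unfolding ridx_def using m by (simp add: nat_less_iff)
  have "(\<Sum>k<m. of_rat (rcontr m e k) * w ^ k) = of_rat (rsgn m e) * w ^ ridx m e"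
  proof -
    have "of_rat (rcontr m e k) * w ^ k = (if k = ridx m e then of_rat (rsgn m e) * w ^ k else 0)" for k
      by (auto simp: rcontr_def)
    then show ?thesis using idx by (simp add: sum.delta')
  qed
  moreover have "w powi e = (w ^ m) powi (e div int m) * w powi (e mod int m)"
  proof -
    have "w powi e = w powi (int m * (e div int m) + e mod int m)"
      by simp
    also have "\<dots> = (w powi int m) powi (e div int m) * w powi (e mod int m)"
      using w0 by (simp only: power_int_add power_int_mult simp_thms)
    finally show ?thesis
      by (simp only: power_int_of_nat)
  qed
  moreover have "w powi (e mod int m) = w ^ ridx m e"
    using m by (simp add: ridx_def power_int_of_nat[symmetric])
  ultimately show ?thesis using w by (simp add: rsgn_def power_int_minus_left)
qed

lemma rpoly_sum_rcontr:
  assumes m: "m > 0" and w: "w ^ m = -1"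
  shows "rpoly m (\<lambda>k. \<Sum>i<m. \<Sum>j<m. p i j * rcontr m (e i j) k + q i j * rcontr m (f i j) k) w
       = (\<Sum>i<m. \<Sum>j<m. of_rat (p i j) * w powi e i j + of_rat (q i j) * w powi f i j)"
proof -
  have "rpoly m (\<lambda>k. \<Sum>i<m. \<Sum>j<m. p i j * rcontr m (e i j) k + q i j * rcontr m (f i j) k) w
      = (\<Sum>k<m. \<Sum>i<m. \<Sum>j<m. of_rat (p i j * rcontr m (e i j) k + q i j * rcontr m (f i j) k) * w ^ k)"
    by (simp add: rpoly_def of_rat_sum sum_distrib_right)
  also have "\<dots> = (\<Sum>i<m. \<Sum>j<m. \<Sum>k<m. of_rat (p i j * rcontr m (e i j) k + q i j * rcontr m (f i j) k) * w ^ k)"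
    by (subst sum.swap) (rule sum.cong[OF refl], rule sum.swap)
  also have "\<dots> = (\<Sum>i<m. \<Sum>j<m. of_rat (p i j) * (\<Sum>k<m. of_rat (rcontr m (e i j) k) * w ^ k)
                              + of_rat (q i j) * (\<Sum>k<m. of_rat (rcontr m (f i j) k) * w ^ k))"
    by (simp add: of_rat_add of_rat_mult algebra_simps sum.distrib sum_distrib_left)
  finally show ?thesis by (simp add: sum_rcontr_mult_power[OF m w])
qed

lemma rpoly_dmult:
  assumes m: "m > 0" and w: "w ^ m = -1"
  shows "rpoly m (fst (dmult m (a,b) (c,d))) w = rpoly m a w * rpoly m c w + rpoly m b (inverse w) * rpoly m d w"
    and "rpoly m (snd (dmult m (a,b) (c,d))) w = rpoly m a (inverse w) * rpoly m d w + rpoly m b w * rpoly m c w"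
proof -
  have w0: "w \<noteq> 0" using w m by (metis zero_neq_neg_one zero_power)
  have plus: "w powi (int i + int j) = w ^ i * w ^ j"
    and minus: "w powi (int j - int i) = inverse w ^ i * w ^ j" for i j
    using w0 by (simp_all add: power_int_add power_int_diff power_inverse field_simps)
  have "rpoly m (fst (dmult m (a,b) (c,d))) w
      = (\<Sum>i<m. \<Sum>j<m. of_rat (a i * c j) * w powi (int i + int j) + of_rat (b i * d j) * w powi (int j - int i))"
    using rpoly_sum_rcontr[OF m w, where p = "\<lambda>i j. a i * c j" and e = "\<lambda>i j. int i + int j"
        and q = "\<lambda>i j. b i * d j" and f = "\<lambda>i j. int j - int i"]
    by (simp add: dmult_def)
  also have "\<dots> = (\<Sum>i<m. \<Sum>j<m. (of_rat (a i) * w ^ i) * (of_rat (c j) * w ^ j)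
                              + (of_rat (b i) * inverse w ^ i) * (of_rat (d j) * w ^ j))"
    by (simp add: plus minus of_rat_mult mult_ac)
  finally show "rpoly m (fst (dmult m (a,b) (c,d))) w
      = rpoly m a w * rpoly m c w + rpoly m b (inverse w) * rpoly m d w"
    by (simp add: rpoly_def sum_product sum.distrib)
  have "rpoly m (snd (dmult m (a,b) (c,d))) w
      = (\<Sum>i<m. \<Sum>j<m. of_rat (a i * d j) * w powi (int j - int i) + of_rat (b i * c j) * w powi (int i + int j))"
    using rpoly_sum_rcontr[OF m w, where p = "\<lambda>i j. a i * d j" and e = "\<lambda>i j. int j - int i"
        and q = "\<lambda>i j. b i * c j" and f = "\<lambda>i j. int i + int j"]
    by (simp add: dmult_def)
  also have "\<dots> = (\<Sum>i<m. \<Sum>j<m. (of_rat (a i) * inverse w ^ i) * (of_rat (d j) * w ^ j)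
                              + (of_rat (b i) * w ^ i) * (of_rat (c j) * w ^ j))"
    by (simp add: plus minus of_rat_mult mult_ac)
  finally show "rpoly m (snd (dmult m (a,b) (c,d))) w
      = rpoly m a (inverse w) * rpoly m d w + rpoly m b w * rpoly m c w"
    by (simp add: rpoly_def sum_product sum.distrib)
qed

lemma dmult_eq_0_beyond:
  assumes "m > 0" and "k \<ge> m"
  shows "fst (dmult m x y) k = 0" and "snd (dmult m x y) k = 0"
proof -
  have "rcontr m e k = 0" for e
  proof -
    have "nat (e mod int m) < m" using assms by (simp add: nat_less_iff)
    then show ?thesis using assms unfolding rcontr_def ridx_def by auto
  qed
  then show "fst (dmult m x y) k = 0" "snd (dmult m x y) k = 0"
    by (auto simp: dmult_def split: prod.splits)
qed

lemma rpoly_d_one: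
  assumes "m > 0"
  shows "rpoly m (fst d_one) w = 1" and "rpoly m (snd d_one) w = 0"
proof -
  have "of_rat (fst d_one i) * w ^ i = (if i = 0 then 1 else 0)" for i
    by (simp add: d_one_def)
  then show "rpoly m (fst d_one) w = 1"
    using assms by (simp add: rpoly_def)
  show "rpoly m (snd d_one) w = 0"
    by (simp add: rpoly_def d_one_def)
qed

lemma card_roots_neg_one:
  assumes m: "m > 0"
  shows "card {w::complex. w ^ m = -1} = m"
proof -
  define z where "z = cis (pi / m)"
  have zm: "z ^ m = -1" unfolding z_def using m by (simp add: DeMoivre)
  have z0: "z \<noteq> 0" unfolding z_def by simp
  have "{w::complex. w ^ m = -1} = (\<lambda>u. z * u) ` {u. u ^ m = 1}"
  proof safe
    fix w :: complex assume "w ^ m = -1"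
    then have "(w / z) ^ m = 1" using zm z0 by (simp add: power_divide)
    moreover have "w = z * (w / z)" using z0 by simp
    ultimately show "w \<in> (\<lambda>u. z * u) ` {u. u ^ m = 1}" by blast
  next
    fix u :: complex assume "u ^ m = 1"
    then show "(z * u) ^ m = -1" using zm by (simp add: power_mult_distrib)
  qed
  moreover have "inj_on (\<lambda>u. z * u) {u. u ^ m = 1}" using z0 by (auto simp: inj_on_def)
  ultimately show ?thesis using card_image card_roots_unity_eq[OF m] by metis
qed

text \<open>A polynomial of degree below m vanishing at the m roots of w^m = -1 is zero.\<close>
lemma coeff_eq_if_rpoly_eq:
  assumes m: "m > 0" and eq: "\<And>w. w ^ m = -1 \<Longrightarrow> rpoly m f w = rpoly m g w" and i: "i < m"
  shows "f i = g i"
proof (rule ccontr)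
  assume ne: "f i \<noteq> g i"
  define p :: "complex poly" where "p = (\<Sum>j<m. monom (of_rat (f j - g j)) j)"
  have coeff_p: "coeff p j = (if j < m then of_rat (f j - g j) else 0)" for j
    unfolding p_def by (simp add: coeff_sum coeff_monom)
  have "p \<noteq> 0"
    using coeff_p[of i] i ne by auto
  have "degree p \<le> m - 1"
    by (rule degree_le) (use coeff_p in auto)
  then have "degree p < m"
    using m by simp
  have "{w::complex. w ^ m = -1} \<subseteq> {w. poly p w = 0}"
    using eq by (auto simp: p_def rpoly_def poly_sum poly_monom of_rat_diff algebra_simps sum_subtractf)
  then have "m \<le> card {w. poly p w = 0}"
    using card_mono[OF poly_roots_finite[OF \<open>p \<noteq> 0\<close>]] card_roots_neg_one[OF m] by metis
  also have "\<dots> \<le> degree p" by (rule card_poly_roots_bound[OF \<open>p \<noteq> 0\<close>])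
  finally show False using \<open>degree p < m\<close> by simp
qed

lemma fun_eq_if_rpoly_eq:
  assumes m: "m > 0" and "\<And>k. k \<ge> m \<Longrightarrow> f k = 0" and "\<And>k. k \<ge> m \<Longrightarrow> g k = 0"
    and "\<And>w. w ^ m = -1 \<Longrightarrow> rpoly m f w = rpoly m g w"
  shows "f = g"
proof
  fix k show "f k = g k"
    using assms coeff_eq_if_rpoly_eq[OF m] by (cases "k < m") auto
qed

section \<open>The determinant of the two-dimensional representations\<close>

text \<open>A right inverse of a 2x2 matrix is a left inverse, written out for [[p, q'], [q, p']]
  and [[c, d'], [d, c']].\<close>
lemma mat2_right_inverse_imp_left_inverse:
  fixes p p' q q' c c' d d' :: "'a::comm_ring_1"
  assumes r1: "p * c + q' * d = 1" and r2: "p' * d + q * c = 0"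
      and r3: "p' * c' + q * d' = 1" and r4: "p * d' + q' * c' = 0"
  shows "c * p + d' * q = 1" and "d * p + c' * q = 0"
proof -
  let ?\<delta> = "p * p' - q * q'" and ?\<epsilon> = "c * c' - d * d'"
  have "?\<delta> * ?\<epsilon> = (p * c + q' * d) * (p' * c' + q * d') - (p' * d + q * c) * (p * d' + q' * c')"
    by (simp add: algebra_simps)
  then have det: "?\<delta> * ?\<epsilon> = 1"
    using r1 r2 r3 r4 by simp
  have "?\<delta> * c = p' * (p * c + q' * d) - q' * (p' * d + q * c)"
    and "?\<delta> * d = p * (p' * d + q * c) - q * (p * c + q' * d)"
    and "?\<delta> * c' = p * (p' * c' + q * d') - q * (p * d' + q' * c')"
    and "?\<delta> * d' = p' * (p * d' + q' * c') - q' * (p' * c' + q * d')"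
    by (simp_all add: algebra_simps)
  then have adj: "?\<delta> * c = p'" "?\<delta> * d = - q" "?\<delta> * c' = p" "?\<delta> * d' = - q'"
    using r1 r2 r3 r4 by simp_all
  have "c * p + d' * q = (?\<delta> * ?\<epsilon>) * (c * p + d' * q)"
    using det by simp
  also have "\<dots> = ?\<epsilon> * ((?\<delta> * c) * p + (?\<delta> * d') * q)"
    by (simp add: algebra_simps)
  also have "\<dots> = ?\<delta> * ?\<epsilon>"
    unfolding adj by (simp add: algebra_simps)
  finally show "c * p + d' * q = 1"
    using det by simp
  have "d * p + c' * q = (?\<delta> * ?\<epsilon>) * (d * p + c' * q)"
    using det by simp
  also have "\<dots> = ?\<epsilon> * ((?\<delta> * d) * p + (?\<delta> * c') * q)"
    by (simp add: algebra_simps)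
  also have "\<dots> = 0"
    unfolding adj by (simp add: algebra_simps)
  finally show "d * p + c' * q = 0" .
qed

lemma mat2_mult_eq_0_imp_eq_0:
  fixes p p' q q' c d :: "'a::idom"
  assumes "p * p' - q * q' \<noteq> 0" and "p * c + q' * d = 0" and "p' * d + q * c = 0"
  shows "c = 0" and "d = 0"
proof -
  have "(p * p' - q * q') * c = p' * (p * c + q' * d) - q' * (p' * d + q * c)"
    and "(p * p' - q * q') * d = p * (p' * d + q * c) - q * (p * c + q' * d)"
    by (simp_all add: algebra_simps)
  then show "c = 0" "d = 0"
    using assms by simp_all
qed

definition dnorm :: "nat \<Rightarrow> (nat \<Rightarrow> rat) \<Rightarrow> (nat \<Rightarrow> rat) \<Rightarrow> complex \<Rightarrow> complex" where
  "dnorm m a b w = rpoly m a w * rpoly m a (inverse w) - rpoly m b w * rpoly m b (inverse w)"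

lemma dnorm_inverse: "dnorm m a b (inverse w) = dnorm m a b w"
  unfolding dnorm_def by (simp add: mult.commute)

lemma dnorm_dmult:
  assumes m: "m > 0" and w: "w ^ m = -1"
  shows "dnorm m (fst (dmult m (a,b) (c,d))) (snd (dmult m (a,b) (c,d))) w = dnorm m a b w * dnorm m c d w"
proof -
  have w': "inverse w ^ m = -1" using w by (simp add: power_inverse)
  show ?thesis
    unfolding dnorm_def rpoly_dmult[OF m w] rpoly_dmult[OF m w'] inverse_inverse_eq
    by (simp add: algebra_simps)
qed

lemma dnorm_d_one: "m > 0 \<Longrightarrow> dnorm m (fst d_one) (snd d_one) w = 1"
  unfolding dnorm_def by (simp add: rpoly_d_one)

lemma dmult_eq_0_imp_coeffs_eq_0:
  assumes m: "m > 0" and nz: "\<And>w. w ^ m = -1 \<Longrightarrow> dnorm m a b w \<noteq> 0"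
    and zero: "dmult m (a,b) (c,d) = ((\<lambda>_. 0), (\<lambda>_. 0))"
  shows "\<forall>j<m. c j = 0 \<and> d j = 0"
proof -
  have rpoly_0: "rpoly m (\<lambda>_. 0) w = 0" for w
    by (simp add: rpoly_def)
  have "rpoly m c w = rpoly m (\<lambda>_. 0) w \<and> rpoly m d w = rpoly m (\<lambda>_. 0) w" if w: "w ^ m = -1" for w
  proof -
    have "rpoly m a w * rpoly m c w + rpoly m b (inverse w) * rpoly m d w = 0"
      and "rpoly m a (inverse w) * rpoly m d w + rpoly m b w * rpoly m c w = 0"
      using rpoly_dmult[OF m w, of a b c d] by (simp_all add: zero rpoly_0)
    from mat2_mult_eq_0_imp_eq_0[OF nz[OF w, unfolded dnorm_def] this]
    show ?thesis by (simp add: rpoly_0)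
  qed
  then show ?thesis
    using coeff_eq_if_rpoly_eq[OF m] by blast
qed

lemma dmult_right_inverse_imp_left_inverse:
  assumes m: "m > 0" and xy: "dmult m (a,b) (c,d) = d_one"
  shows "dmult m (c,d) (a,b) = d_one"
proof -
  have eval: "rpoly m (fst (dmult m (c,d) (a,b))) w = rpoly m (fst d_one) w \<and>
        rpoly m (snd (dmult m (c,d) (a,b))) w = rpoly m (snd d_one) w" if w: "w ^ m = -1" for w
  proof -
    have w': "inverse w ^ m = -1" using w by (simp add: power_inverse)
    have "rpoly m a w * rpoly m c w + rpoly m b (inverse w) * rpoly m d w = 1"
      and "rpoly m a (inverse w) * rpoly m d w + rpoly m b w * rpoly m c w = 0"
      using rpoly_dmult[OF m w, of a b c d] by (simp_all add: xy rpoly_d_one[OF m])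
    moreover have "rpoly m a (inverse w) * rpoly m c (inverse w) + rpoly m b w * rpoly m d (inverse w) = 1"
      and "rpoly m a w * rpoly m d (inverse w) + rpoly m b (inverse w) * rpoly m c (inverse w) = 0"
      using rpoly_dmult[OF m w', of a b c d] by (simp_all add: xy rpoly_d_one[OF m])
    ultimately have "rpoly m c w * rpoly m a w + rpoly m d (inverse w) * rpoly m b w = 1"
      and "rpoly m d w * rpoly m a w + rpoly m c (inverse w) * rpoly m b w = 0"
      by (rule mat2_right_inverse_imp_left_inverse)+
    then show ?thesis
      using rpoly_dmult[OF m w, of c d a b] by (simp add: rpoly_d_one[OF m] add.commute)
  qed
  show ?thesis
  proof (rule prod_eqI)
    show "fst (dmult m (c,d) (a,b)) = fst d_one" "snd (dmult m (c,d) (a,b)) = snd d_one"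
      by (rule fun_eq_if_rpoly_eq[OF m]; use m eval dmult_eq_0_beyond[OF m] in \<open>simp add: d_one_def\<close>)+
  qed
qed

section \<open>Left multiplication as a rational matrix\<close>

lemma mat_mult_vec_solvable_if_inj:
  fixes A :: "'a::field mat"
  assumes A: "A \<in> carrier_mat n n"
    and inj: "\<And>v. v \<in> carrier_vec n \<Longrightarrow> A *\<^sub>v v = 0\<^sub>v n \<Longrightarrow> v = 0\<^sub>v n"
    and b: "b \<in> carrier_vec n"
  shows "\<exists>v \<in> carrier_vec n. A *\<^sub>v v = b"
proof -
  have "det A \<noteq> 0"
    using det_0_iff_vec_prod_zero_field[OF A] inj by blast
  from det_non_zero_imp_unit[OF A this, of undefined]
  obtain B where B: "B \<in> carrier_mat n n" and AB: "A * B = 1\<^sub>m n"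
    unfolding Units_def ring_mat_def by auto
  have "A *\<^sub>v (B *\<^sub>v b) = b"
    using assoc_mult_mat_vec[OF A B b] AB b by simp
  then show ?thesis
    using B b by (intro bexI[of _ "B *\<^sub>v b"]) auto
qed

text \<open>The coefficient of r^k in r^j a(r), respectively in r^j a(r^-1).\<close>
definition shift_coeff :: "nat \<Rightarrow> (nat \<Rightarrow> rat) \<Rightarrow> nat \<Rightarrow> nat \<Rightarrow> rat" where
  "shift_coeff m a k j = (\<Sum>i<m. a i * rcontr m (int i + int j) k)"

definition shift_conj_coeff :: "nat \<Rightarrow> (nat \<Rightarrow> rat) \<Rightarrow> nat \<Rightarrow> nat \<Rightarrow> rat" where
  "shift_conj_coeff m a k j = (\<Sum>i<m. a i * rcontr m (int j - int i) k)"

lemma dmult_eq_sum_shift_coeff: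
  shows "fst (dmult m (a,b) (c,d)) k = (\<Sum>j<m. c j * shift_coeff m a k j + d j * shift_conj_coeff m b k j)"
    and "snd (dmult m (a,b) (c,d)) k = (\<Sum>j<m. c j * shift_coeff m b k j + d j * shift_conj_coeff m a k j)"
proof -
  have "fst (dmult m (a,b) (c,d)) k = (\<Sum>i<m. \<Sum>j<m. a i * c j * rcontr m (int i + int j) k
                                                 + b i * d j * rcontr m (int j - int i) k)"
    by (simp add: dmult_def)
  also have "\<dots> = (\<Sum>j<m. \<Sum>i<m. a i * c j * rcontr m (int i + int j) k
                                  + b i * d j * rcontr m (int j - int i) k)"
    by (rule sum.swap)
  finally show "fst (dmult m (a,b) (c,d)) k = (\<Sum>j<m. c j * shift_coeff m a k j + d j * shift_conj_coeff m b k j)"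
    by (simp add: shift_coeff_def shift_conj_coeff_def sum_distrib_left sum.distrib mult_ac)
  have "snd (dmult m (a,b) (c,d)) k = (\<Sum>i<m. \<Sum>j<m. a i * d j * rcontr m (int j - int i) k
                                                 + b i * c j * rcontr m (int i + int j) k)"
    by (simp add: dmult_def)
  also have "\<dots> = (\<Sum>j<m. \<Sum>i<m. a i * d j * rcontr m (int j - int i) k
                                  + b i * c j * rcontr m (int i + int j) k)"
    by (rule sum.swap)
  finally show "snd (dmult m (a,b) (c,d)) k = (\<Sum>j<m. c j * shift_coeff m b k j + d j * shift_conj_coeff m a k j)"
    by (simp add: shift_coeff_def shift_conj_coeff_def sum_distrib_left sum.distrib mult_ac)
qed

definition vec_of_pair :: "nat \<Rightarrow> (nat \<Rightarrow> rat) \<times> (nat \<Rightarrow> rat) \<Rightarrow> rat vec" where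
  "vec_of_pair m x = vec (2 * m) (\<lambda>k. if k < m then fst x k else snd x (k - m))"

definition pair_of_vec :: "nat \<Rightarrow> rat vec \<Rightarrow> (nat \<Rightarrow> rat) \<times> (nat \<Rightarrow> rat)" where
  "pair_of_vec m v = ((\<lambda>j. if j < m then v $ j else 0), (\<lambda>j. if j < m then v $ (j + m) else 0))"

lemma pair_eq_if_vec_of_pair_eq:
  assumes "vec_of_pair m x = vec_of_pair m y"
    and "\<And>k. k \<ge> m \<Longrightarrow> fst x k = 0 \<and> snd x k = 0" and "\<And>k. k \<ge> m \<Longrightarrow> fst y k = 0 \<and> snd y k = 0"
  shows "x = y"
proof (rule prod_eqI; rule ext)
  fix k
  have eq: "vec_of_pair m x $ j = vec_of_pair m y $ j" for j
    using assms(1) by simp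
  show "fst x k = fst y k"
    using eq[of k] assms(2,3)[of k] by (cases "k < m") (auto simp: vec_of_pair_def)
  show "snd x k = snd y k"
    using eq[of "k + m"] assms(2,3)[of k] by (cases "k < m") (auto simp: vec_of_pair_def)
qed

definition lmul_mat :: "nat \<Rightarrow> (nat \<Rightarrow> rat) \<Rightarrow> (nat \<Rightarrow> rat) \<Rightarrow> rat mat" where
  "lmul_mat m a b = mat (2 * m) (2 * m) (\<lambda>(k, j).
     if k < m then (if j < m then shift_coeff m a k j else shift_conj_coeff m b k (j - m))
     else (if j < m then shift_coeff m b (k - m) j else shift_conj_coeff m a (k - m) (j - m)))"

lemma sum_lessThan_double:
  fixes f :: "nat \<Rightarrow> 'a::comm_monoid_add"
  shows "(\<Sum>j<2 * m. f j) = (\<Sum>j<m. f j) + (\<Sum>j<m. f (j + m))"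
proof -
  have "(\<Sum>j<2 * m. f j) = (\<Sum>j<m. f j) + (\<Sum>j\<in>{m..<2 * m}. f j)"
    using sum.atLeastLessThan_concat[of 0 m "2 * m" f] by (simp add: atLeast0LessThan)
  also have "(\<Sum>j\<in>{m..<2 * m}. f j) = (\<Sum>j<m. f (j + m))"
    using sum.shift_bounds_nat_ivl[of f 0 m m] by (simp add: mult_2 atLeast0LessThan)
  finally show ?thesis .
qed

lemma lmul_mat_mult_vec:
  assumes v: "v \<in> carrier_vec (2 * m)"
  shows "lmul_mat m a b *\<^sub>v v = vec_of_pair m (dmult m (a,b) (pair_of_vec m v))"
proof (rule eq_vecI)
  fix k assume "k < dim_vec (vec_of_pair m (dmult m (a,b) (pair_of_vec m v)))"
  then have k: "k < 2 * m" by (simp add: vec_of_pair_def)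
  have "(lmul_mat m a b *\<^sub>v v) $ k = (\<Sum>j<2 * m. lmul_mat m a b $$ (k, j) * v $ j)"
    using k v by (simp add: lmul_mat_def scalar_prod_def atLeast0LessThan)
  also have "\<dots> = (\<Sum>j<m. lmul_mat m a b $$ (k, j) * v $ j) + (\<Sum>j<m. lmul_mat m a b $$ (k, j + m) * v $ (j + m))"
    by (rule sum_lessThan_double)
  also have "\<dots> = vec_of_pair m (dmult m (a,b) (pair_of_vec m v)) $ k"
    using k by (simp add: lmul_mat_def vec_of_pair_def pair_of_vec_def dmult_eq_sum_shift_coeff sum.distrib mult_ac)
  finally show "(lmul_mat m a b *\<^sub>v v) $ k = vec_of_pair m (dmult m (a,b) (pair_of_vec m v)) $ k" .
qed (use v in \<open>simp add: lmul_mat_def vec_of_pair_def\<close>)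

lemma dmult_right_inverse_exists:
  assumes m: "m > 0"
    and ker: "\<And>c d. dmult m (a,b) (c,d) = ((\<lambda>_. 0), (\<lambda>_. 0)) \<Longrightarrow> \<forall>j<m. c j = 0 \<and> d j = 0"
  shows "\<exists>y. dmult m (a,b) y = d_one"
proof -
  have L: "lmul_mat m a b \<in> carrier_mat (2 * m) (2 * m)"
    by (simp add: lmul_mat_def)
  have supp: "k \<ge> m \<Longrightarrow> fst (dmult m x y) k = 0 \<and> snd (dmult m x y) k = 0" for k x y
    using dmult_eq_0_beyond[OF m] by blast
  have inj: "v = 0\<^sub>v (2 * m)" if v: "v \<in> carrier_vec (2 * m)" and "lmul_mat m a b *\<^sub>v v = 0\<^sub>v (2 * m)" for v
  proof -
    have "vec_of_pair m ((\<lambda>_. 0), (\<lambda>_. 0)) = 0\<^sub>v (2 * m)"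
      by (auto simp: vec_of_pair_def)
    then have "vec_of_pair m (dmult m (a,b) (pair_of_vec m v)) = vec_of_pair m ((\<lambda>_. 0), (\<lambda>_. 0))"
      using that by (simp only: lmul_mat_mult_vec[OF v, symmetric])
    then have "dmult m (a,b) (pair_of_vec m v) = ((\<lambda>_. 0), (\<lambda>_. 0))"
      by (rule pair_eq_if_vec_of_pair_eq[OF _ supp]) simp_all
    then have "\<forall>j<m. fst (pair_of_vec m v) j = 0 \<and> snd (pair_of_vec m v) j = 0"
      using ker[of "fst (pair_of_vec m v)" "snd (pair_of_vec m v)"] by simp
    then have zero: "v $ j = 0" "v $ (j + m) = 0" if "j < m" for j
      using that by (simp_all add: pair_of_vec_def)
    show ?thesis
    proof (rule eq_vecI)
      fix k assume "k < dim_vec (0\<^sub>v (2 * m))"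
      then have "k < 2 * m" by simp
      then show "v $ k = 0\<^sub>v (2 * m) $ k"
        using zero(1)[of k] zero(2)[of "k - m"] by (cases "k < m") simp_all
    qed (use v in simp)
  qed
  have "vec_of_pair m d_one \<in> carrier_vec (2 * m)"
    by (simp add: vec_of_pair_def)
  then obtain v where v: "v \<in> carrier_vec (2 * m)" and "lmul_mat m a b *\<^sub>v v = vec_of_pair m d_one"
    using mat_mult_vec_solvable_if_inj[OF L inj] by blast
  then have "vec_of_pair m (dmult m (a,b) (pair_of_vec m v)) = vec_of_pair m d_one"
    by (simp only: lmul_mat_mult_vec)
  then have "dmult m (a,b) (pair_of_vec m v) = d_one"
    by (rule pair_eq_if_vec_of_pair_eq[OF _ supp]) (use m in \<open>simp_all add: d_one_def\<close>)
  then show ?thesis ..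
qed

lemma dinvertible_iff_dnorm_nonzero:
  assumes m: "m > 0"
  shows "dinvertible m (a,b) \<longleftrightarrow> (\<forall>w. w ^ m = -1 \<longrightarrow> dnorm m a b w \<noteq> 0)"
proof
  assume "dinvertible m (a,b)"
  then obtain c d where xy: "dmult m (a,b) (c,d) = d_one"
    unfolding dinvertible_def by auto
  show "\<forall>w. w ^ m = -1 \<longrightarrow> dnorm m a b w \<noteq> 0"
  proof (intro allI impI)
    fix w :: complex assume w: "w ^ m = -1"
    have "dnorm m a b w * dnorm m c d w = 1"
      using dnorm_dmult[OF m w, of a b c d] by (simp add: xy dnorm_d_one[OF m])
    then show "dnorm m a b w \<noteq> 0" by auto
  qed
next
  assume "\<forall>w. w ^ m = -1 \<longrightarrow> dnorm m a b w \<noteq> 0"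
  then obtain c d where xy: "dmult m (a,b) (c,d) = d_one"
    using dmult_right_inverse_exists[OF m dmult_eq_0_imp_coeffs_eq_0[OF m]] by (metis surj_pair)
  then show "dinvertible m (a,b)"
    unfolding dinvertible_def using dmult_right_inverse_imp_left_inverse[OF m xy] by blast
qed

section \<open>The roots of w^m = -1 on the unit circle\<close>

lemma rpoly_cnj: "rpoly m a (cnj w) = cnj (rpoly m a w)"
proof -
  have "cnj (of_rat q) = of_rat q" for q
    by (cases q) (simp add: of_rat_rat)
  then show ?thesis
    by (simp add: rpoly_def)
qed

lemma dnorm_cis_eq_0_iff:
  "dnorm m a b (cis t) = 0 \<longleftrightarrow> cmod (rpoly m a (cis t)) = cmod (rpoly m b (cis t))"
proof -
  have "inverse (cis t) = cnj (cis t)"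
    by (simp add: cis_cnj)
  then have "dnorm m a b (cis t) = of_real ((cmod (rpoly m a (cis t)))\<^sup>2 - (cmod (rpoly m b (cis t)))\<^sup>2)"
    unfolding dnorm_def by (simp only: rpoly_cnj of_real_diff complex_norm_square)
  then show ?thesis
    by (simp only: of_real_eq_0_iff) simp
qed

lemma cis_pi_odd_power_eq_neg_one:
  assumes "m > 0" and "odd k"
  shows "cis (pi * real k / real m) ^ m = -1"
proof -
  have "cis (pi * real k / real m) ^ m = cis (real k * pi)"
    using assms(1) by (simp add: DeMoivre mult.commute)
  also have "\<dots> = cis pi ^ k"
    by (simp only: DeMoivre[symmetric])
  finally show ?thesis
    using assms(2) by simp
qed

lemma root_neg_one_eq_cis_odd:
  assumes m: "m > 0" and w: "w ^ m = -1"
  obtains k where "odd k" "1 \<le> k" "k \<le> m"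
    "w = cis (pi * real k / real m) \<or> w = inverse (cis (pi * real k / real m))"
proof -
  have "w ^ (2 * m) = 1"
    using w by (simp add: power_mult mult.commute[of 2 m])
  then obtain j where j: "j < 2 * m" and wj: "w = cis (pi * real j / real m)"
    using bij_betw_roots_unity[of "2 * m"] m unfolding bij_betw_def by auto
  have "odd j"
  proof
    assume "even j"
    then have "w ^ m = cis (real (j div 2) * (2 * pi))"
      using m by (simp add: wj DeMoivre real_of_nat_div mult.commute)
    also have "\<dots> = 1"
      by (simp flip: DeMoivre)
    finally show False using w by simp
  qed
  show ?thesis
  proof (cases "j \<le> m")
    case True
    moreover have "1 \<le> j" using \<open>odd j\<close> by (simp add: odd_pos Suc_le_eq)
    ultimately show ?thesis using that \<open>odd j\<close> wj by blast
  next
    case False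
    have "cis (pi * real (2 * m - j) / real m) = cis (2 * pi) * cis (- (pi * real j / real m))"
      using j m by (simp add: cis_mult of_nat_diff field_simps)
    then have "w = inverse (cis (pi * real (2 * m - j) / real m))"
      by (simp add: wj cis_inverse)
    then show ?thesis
      using that[of "2 * m - j"] False j \<open>odd j\<close> by (simp add: odd_pos)
  qed
qed

lemma dnorm_nonzero_on_roots_iff:
  assumes "m > 0"
  shows "(\<forall>w. w ^ m = -1 \<longrightarrow> dnorm m a b w \<noteq> 0) \<longleftrightarrow>
    (\<forall>k. odd k \<and> 1 \<le> k \<and> k \<le> m \<longrightarrow>
      cmod (rpoly m a (cis (pi * real k / real m))) \<noteq> cmod (rpoly m b (cis (pi * real k / real m))))"
proof
  assume nz: "\<forall>w. w ^ m = -1 \<longrightarrow> dnorm m a b w \<noteq> 0"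
  show "\<forall>k. odd k \<and> 1 \<le> k \<and> k \<le> m \<longrightarrow>
      cmod (rpoly m a (cis (pi * real k / real m))) \<noteq> cmod (rpoly m b (cis (pi * real k / real m)))"
    using nz cis_pi_odd_power_eq_neg_one[OF assms] by (simp flip: dnorm_cis_eq_0_iff)
next
  assume "\<forall>k. odd k \<and> 1 \<le> k \<and> k \<le> m \<longrightarrow>
      cmod (rpoly m a (cis (pi * real k / real m))) \<noteq> cmod (rpoly m b (cis (pi * real k / real m)))"
  then have "dnorm m a b (cis (pi * real k / real m)) \<noteq> 0" if "odd k" "1 \<le> k" "k \<le> m" for k
    using that by (simp add: dnorm_cis_eq_0_iff)
  then show "\<forall>w. w ^ m = -1 \<longrightarrow> dnorm m a b w \<noteq> 0"
    using root_neg_one_eq_cis_odd[OF assms] dnorm_inverse by metis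
qed

lemma exp_eq_cis_power:
  assumes "n = 2 * m" and "m > 0"
  shows "exp (2 * pi * \<i> * of_nat k * of_nat i / of_nat n) = cis (pi * real k / real m) ^ i"
proof -
  have "cis (pi * real k / real m) ^ i = exp (\<i> * of_real (real i * (pi * real k / real m)))"
    unfolding DeMoivre by (rule cis_conv_exp)
  also have "\<i> * of_real (real i * (pi * real k / real m)) = 2 * pi * \<i> * of_nat k * of_nat i / of_nat n"
    using assms by (simp add: field_simps)
  finally show ?thesis ..
qed

theorem lemma4:
  fixes n t :: nat and a b :: "nat \<Rightarrow> int"
  assumes "n = 2 ^ t" and "t \<ge> 1"
  shows "dinvertible (n div 2) ((\<lambda>i. of_int (a i)), (\<lambda>i. of_int (b i))) \<longleftrightarrow>
    (\<forall>k::nat. odd k \<and> 1 \<le> k \<and> k \<le> n div 2 \<longrightarrow>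
      cmod (\<Sum>i<n div 2. of_int (a i) * exp (2 * pi * \<i> * of_nat k * of_nat i / of_nat n))
      - cmod (\<Sum>i<n div 2. of_int (b i) * exp (2 * pi * \<i> * of_nat k * of_nat i / of_nat n)) \<noteq> 0)"
proof -
  define m where "m = n div 2"
  obtain s where "t = Suc s"
    using assms(2) by (cases t) auto
  then have n: "n = 2 * m" and m: "m > 0"
    using assms(1) by (simp_all add: m_def)
  have "(\<Sum>i<m. of_int (x i) * exp (2 * pi * \<i> * of_nat k * of_nat i / of_nat n))
      = rpoly m (\<lambda>i. of_int (x i)) (cis (pi * real k / real m))" for x :: "nat \<Rightarrow> int" and k
    by (simp only: exp_eq_cis_power[OF n m]) (simp add: rpoly_def)
  then show ?thesis
    unfolding m_def[symmetric]
    using dinvertible_iff_dnorm_nonzero[OF m] dnorm_nonzero_on_roots_iff[OF m] by simp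
qed

end
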